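(* For a non-negative integer $n$ and real $x>0$ small, define $$A_n(x)=2\ln(n!\,x)+\ln|\Gamma(-n-x)|+\ln|\Gamma(-n+x)|-x^2\sum_{k=1}^n\frac1{k^2}.$$ Then for every non-negative integer $n$, $$\lim_{x\to0^+}\frac{1}{x^2}\ln\!\left(\frac{A_n(x)}{A_{n+1}(x)}\right)=-\frac{1}{2(n+1)^4\zeta(2)}.$$
   Context: $\Gamma$ is Euler's Gamma function on the real line and $\zeta$ is the Riemann zeta function. *)

theory Defs
  imports "HOL-Analysis.Analysis"
begin

definition zeta_real :: "real \<Rightarrow> real" where
  "zeta_real s = (\<Sum>m. 1 / (real (Suc m)) powr s)"

definition A :: "nat \<Rightarrow> real \<Rightarrow> real" where
  "A n x = 2 * ln (fact n * x) + ln \<bar>Gamma (- real n - x)\<bar> + ln \<bar>Gamma (- real n + x)\<bar>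
           - x\<^sup>2 * (\<Sum>k=1..n. 1 / (real k)\<^sup>2)"

end

theory Submission
  imports Defs "HOL-Real_Asymp.Real_Asymp"
begin

text \<open>The functional equation of \<open>\<Gamma>\<close> gives
  \<open>A\<^sub>n(x) - A\<^sub>n\<^sub>+\<^sub>1(x) = ln (1 - t\<^sup>2) + t\<^sup>2\<close> with \<open>t = x / (n + 1)\<close>, which is
  \<open>- x\<^sup>4 / (2 (n + 1)\<^sup>4) + O(x\<^sup>6)\<close>, and the reflection formula gives
  \<open>A\<^sub>0(x) = ln (\<pi> x / sin (\<pi> x)) \<sim> \<zeta>(2) x\<^sup>2\<close>. Hence \<open>A\<^sub>n(x) \<sim> \<zeta>(2) x\<^sup>2\<close> for every \<open>n\<close>,
  and \<open>ln (A\<^sub>n / A\<^sub>n\<^sub>+\<^sub>1) = ln (1 + u)\<close> with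
  \<open>u = (A\<^sub>n - A\<^sub>n\<^sub>+\<^sub>1) / A\<^sub>n\<^sub>+\<^sub>1 \<sim> - x\<^sup>2 / (2 (n + 1)\<^sup>4 \<zeta>(2))\<close>.\<close>

lemma Gamma_eq_Gamma_plus1_divide: "Gamma (z::real) = Gamma (z + 1) / z"
  using rGamma_plus1[of z] by (simp add: Gamma_def field_simps)

lemma Gamma_int_plus_minus_nonzero:
  fixes k x :: real
  assumes "k \<in> \<int>" "0 < x" "x < 1"
  shows "Gamma (k + x) \<noteq> 0" "Gamma (k - x) \<noteq> 0"
proof -
  have "x \<notin> \<int>" using assms(2,3) Ints_nonzero_abs_less1 by force
  then have "k + x \<notin> \<int>" "k - x \<notin> \<int>"
    using \<open>k \<in> \<int>\<close> Ints_diff[of "k + x" k] Ints_diff[of k "k - x"] by auto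
  then show "Gamma (k + x) \<noteq> 0" "Gamma (k - x) \<noteq> 0"
    using nonpos_Ints_subset_Ints by (auto simp: Gamma_eq_zero_iff)
qed

lemma Gamma_reflection_real: "Gamma (x::real) * Gamma (- x) = - pi / (x * sin (pi * x))"
proof -
  have "complex_of_real (Gamma x * Gamma (- x)) =
        - of_real pi / (of_real x * sin (of_real pi * of_real x))"
    using Gamma_reflection_complex'[of "of_real x"]
    by (simp add: Gamma_complex_of_real flip: of_real_minus)
  also have "\<dots> = complex_of_real (- pi / (x * sin (pi * x)))"
    by (simp flip: sin_of_real)
  finally show ?thesis by (rule of_real_eq_iff[THEN iffD1])
qed

lemma A_0_eq:
  assumes x: "0 < x" "x < 1"
  shows "A 0 x = ln (pi * x / sin (pi * x))"
proof -
  have sin_pos: "sin (pi * x) > 0" using x by (intro sin_gt_zero) auto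
  have "\<bar>Gamma (- x)\<bar> * \<bar>Gamma x\<bar> = \<bar>Gamma x * Gamma (- x)\<bar>"
    by (simp add: abs_mult)
  also have "\<dots> = pi / (x * sin (pi * x))"
    using x sin_pos by (simp add: Gamma_reflection_real)
  finally have prod: "\<bar>Gamma (- x)\<bar> * \<bar>Gamma x\<bar> = pi / (x * sin (pi * x))" .
  have "Gamma x \<noteq> 0" "Gamma (- x) \<noteq> 0"
    using Gamma_int_plus_minus_nonzero[of 0 x] x by auto
  then have "A 0 x = ln (x\<^sup>2) + ln (\<bar>Gamma (- x)\<bar> * \<bar>Gamma x\<bar>)"
    using x by (simp add: A_def ln_mult ln_realpow)
  also have "\<dots> = ln (x\<^sup>2 * (pi / (x * sin (pi * x))))"
    unfolding prod using x sin_pos by (subst ln_mult) auto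
  also have "x\<^sup>2 * (pi / (x * sin (pi * x))) = pi * x / sin (pi * x)"
    using x by (simp add: field_simps power2_eq_square)
  finally show ?thesis .
qed

lemma A_diff_Suc:
  assumes x: "0 < x" "x < 1"
  shows "A n x - A (Suc n) x = ln (1 - x\<^sup>2 / (real n + 1)\<^sup>2) + x\<^sup>2 / (real n + 1)\<^sup>2"
proof -
  define c where "c = real n + 1"
  have c: "c \<ge> 1" and cx: "c + x > 0" "c - x > 0" using x by (auto simp: c_def)
  have nz: "Gamma (- real n - x) \<noteq> 0" "Gamma (- real n + x) \<noteq> 0"
    using Gamma_int_plus_minus_nonzero[of "- real n" x] x by auto
  have shift: "- real (Suc n) - x = - c - x" "- c - x + 1 = - real n - x"
    "- real (Suc n) + x = - c + x" "- c + x + 1 = - real n + x"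
    by (simp_all add: c_def)
  have "\<bar>Gamma (- real (Suc n) - x)\<bar> = \<bar>Gamma (- real n - x)\<bar> / (c + x)"
    using Gamma_eq_Gamma_plus1_divide[of "- c - x"] cx unfolding shift by (simp add: abs_divide)
  then have minus: "ln \<bar>Gamma (- real (Suc n) - x)\<bar> = ln \<bar>Gamma (- real n - x)\<bar> - ln (c + x)"
    using nz cx by (simp add: ln_div)
  have "\<bar>Gamma (- real (Suc n) + x)\<bar> = \<bar>Gamma (- real n + x)\<bar> / (c - x)"
    using Gamma_eq_Gamma_plus1_divide[of "- c + x"] cx unfolding shift by (simp add: abs_divide)
  then have plus: "ln \<bar>Gamma (- real (Suc n) + x)\<bar> = ln \<bar>Gamma (- real n + x)\<bar> - ln (c - x)"
    using nz cx by (simp add: ln_div)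
  have "fact (Suc n) * x = c * (fact n * x)" by (simp add: c_def)
  then have fact: "ln (fact (Suc n) * x) = ln c + ln (fact n * x)"
    using c x by (simp add: ln_mult)
  have "1 - x\<^sup>2 / c\<^sup>2 = (c + x) * (c - x) / c\<^sup>2"
    using c by (simp add: field_simps power2_eq_square)
  then have square: "ln (1 - x\<^sup>2 / c\<^sup>2) = ln (c + x) + ln (c - x) - 2 * ln c"
    using c cx by (simp add: ln_div ln_mult ln_realpow)
  have "(\<Sum>k=1..Suc n. 1 / (real k)\<^sup>2) = (\<Sum>k=1..n. 1 / (real k)\<^sup>2) + 1 / c\<^sup>2"
    by (simp add: c_def)
  then have "A n x - A (Suc n) x = ln (1 - x\<^sup>2 / c\<^sup>2) + x\<^sup>2 / c\<^sup>2"
    unfolding A_def minus plus fact square by (simp add: algebra_simps)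
  then show ?thesis by (simp add: c_def)
qed

lemma tendsto_at_right_0_transform:
  fixes f g :: "real \<Rightarrow> real"
  assumes "(f \<longlongrightarrow> l) (at_right 0)" "\<And>x. 0 < x \<Longrightarrow> x < 1 \<Longrightarrow> f x = g x" "l = l'"
  shows "(g \<longlongrightarrow> l') (at_right 0)"
proof -
  have "eventually (\<lambda>x::real. 0 < x \<and> x < 1) (at_right 0)"
    unfolding eventually_at_right_field by (intro exI[of _ 1]) auto
  then show ?thesis
    using assms by (auto elim!: Lim_transform_eventually eventually_mono)
qed

lemma tendsto_ln_one_minus_square_over_fourth_power:
  "c > 0 \<Longrightarrow>
    ((\<lambda>x::real. (ln (1 - x\<^sup>2 / c\<^sup>2) + x\<^sup>2 / c\<^sup>2) / x ^ 4) \<longlongrightarrow> - 1 / (2 * c ^ 4)) (at_right 0)"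
  by (real_asymp simp add: field_simps power2_eq_square power4_eq_xxxx)

lemma tendsto_ln_x_over_sin_over_square:
  "((\<lambda>x::real. ln (pi * x / sin (pi * x)) / x\<^sup>2) \<longlongrightarrow> pi\<^sup>2 / 6) (at_right 0)"
proof -
  \<comment> \<open>\<open>real_asymp\<close> computes the limit in this form but cannot identify it with \<open>\<pi>\<^sup>2 / 6\<close>\<close>
  have "pi\<^sup>2 / 6 = pi * (inverse pi * (inverse pi * (pi * (pi * pi)))) / 6"
    by (simp add: field_simps power2_eq_square)
  then show ?thesis by (simp only:) real_asymp
qed

lemma A_diff_Suc_tendsto:
  "((\<lambda>x. (A n x - A (Suc n) x) / x ^ 4) \<longlongrightarrow> - 1 / (2 * (real n + 1) ^ 4)) (at_right 0)"
  using tendsto_ln_one_minus_square_over_fourth_power[of "real n + 1"]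
  by (rule tendsto_at_right_0_transform) (simp_all add: A_diff_Suc)

lemma zeta_real_2: "zeta_real 2 = pi\<^sup>2 / 6"
  using inverse_squares_sums unfolding zeta_real_def
  by (intro sums_unique[symmetric]) (simp add: add.commute)

lemma A_over_square_tendsto: "((\<lambda>x. A n x / x\<^sup>2) \<longlongrightarrow> zeta_real 2) (at_right 0)"
  unfolding zeta_real_2
proof (induction n)
  case 0
  show ?case
    using tendsto_ln_x_over_sin_over_square
    by (rule tendsto_at_right_0_transform) (simp_all add: A_0_eq)
next
  case (Suc n)
  have "((\<lambda>x. A n x / x\<^sup>2 - (A n x - A (Suc n) x) / x ^ 4 * x\<^sup>2)
          \<longlongrightarrow> pi\<^sup>2 / 6 - - 1 / (2 * (real n + 1) ^ 4) * 0\<^sup>2) (at_right 0)"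
    by (intro tendsto_intros Suc A_diff_Suc_tendsto)
  then show ?case
    by (rule tendsto_at_right_0_transform) (simp_all add: field_simps power2_eq_square power4_eq_xxxx)
qed

lemma isCont_ln_one_plus_quotient:
  "isCont (\<lambda>v::real. if v = 0 then 1 else ln (1 + v) / v) 0"
proof -
  have "((\<lambda>v::real. ln (1 + v) / v) \<longlongrightarrow> 1) (at 0)" by real_asymp
  then have "((\<lambda>v::real. if v = 0 then 1 else ln (1 + v) / v) \<longlongrightarrow> 1) (at 0)"
    by (rule Lim_transform_eventually) (simp add: eventually_at_filter)
  then show ?thesis by (simp add: isCont_def)
qed

lemma tendsto_ln_quotient_over_square:
  fixes f g :: "real \<Rightarrow> real"
  assumes g: "((\<lambda>x. g x / x\<^sup>2) \<longlongrightarrow> b) (at_right 0)" and "b \<noteq> 0"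
    and fg: "((\<lambda>x. (f x - g x) / x ^ 4) \<longlongrightarrow> d) (at_right 0)"
  shows "((\<lambda>x. ln (f x / g x) / x\<^sup>2) \<longlongrightarrow> d / b) (at_right 0)"
proof -
  define u where "u x = (f x - g x) / g x" for x
  define L where "L v = (if v = 0 then 1 else ln (1 + v) / v)" for v :: real
  have "eventually (\<lambda>x. g x / x\<^sup>2 \<noteq> 0) (at_right 0)"
    using g \<open>b \<noteq> 0\<close> by (rule tendsto_imp_eventually_ne)
  then have ev: "eventually (\<lambda>x. 0 < x \<and> g x \<noteq> 0) (at_right 0)"
    using eventually_at_right_less[of 0] by eventually_elim auto
  have u_eq: "u x = (f x - g x) / x ^ 4 * x\<^sup>2 / (g x / x\<^sup>2)" if "0 < x \<and> g x \<noteq> 0" for x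
    using that by (simp add: u_def field_simps power2_eq_square power4_eq_xxxx)
  have "((\<lambda>x. (f x - g x) / x ^ 4 * x\<^sup>2 / (g x / x\<^sup>2)) \<longlongrightarrow> d * 0\<^sup>2 / b) (at_right 0)"
    by (intro tendsto_intros fg g \<open>b \<noteq> 0\<close>)
  then have "((\<lambda>x. (f x - g x) / x ^ 4 * x\<^sup>2 / (g x / x\<^sup>2)) \<longlongrightarrow> 0) (at_right 0)"
    by (rule tendsto_cong_limit) simp
  moreover have "eventually (\<lambda>x. (f x - g x) / x ^ 4 * x\<^sup>2 / (g x / x\<^sup>2) = u x) (at_right 0)"
    using ev by (rule eventually_mono) (rule u_eq[symmetric])
  ultimately have "(u \<longlongrightarrow> 0) (at_right 0)"
    by (rule Lim_transform_eventually)
  moreover have "isCont L 0"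
    unfolding L_def[abs_def] by (rule isCont_ln_one_plus_quotient)
  ultimately have "((\<lambda>x. L (u x)) \<longlongrightarrow> L 0) (at_right 0)"
    by (rule isCont_tendsto_compose[rotated])
  then have lim: "((\<lambda>x. L (u x) * ((f x - g x) / x ^ 4) / (g x / x\<^sup>2)) \<longlongrightarrow> 1 * d / b) (at_right 0)"
    by (intro tendsto_intros fg g \<open>b \<noteq> 0\<close>) (simp add: L_def)
  have ln_quotient_eq: "L (u x) * ((f x - g x) / x ^ 4) / (g x / x\<^sup>2) = ln (f x / g x) / x\<^sup>2"
    if "0 < x \<and> g x \<noteq> 0" for x
  proof -
    have "f x / g x = 1 + u x" using that by (simp add: u_def field_simps)
    then have "ln (f x / g x) / x\<^sup>2 = L (u x) * (u x / x\<^sup>2)" by (simp add: L_def)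
    also have "u x / x\<^sup>2 = (f x - g x) / x ^ 4 / (g x / x\<^sup>2)"
      using that by (simp add: u_def field_simps power2_eq_square power4_eq_xxxx)
    finally show ?thesis by simp
  qed
  have "eventually (\<lambda>x. L (u x) * ((f x - g x) / x ^ 4) / (g x / x\<^sup>2) = ln (f x / g x) / x\<^sup>2)
      (at_right 0)"
    using ev by (rule eventually_mono) (rule ln_quotient_eq)
  with lim show ?thesis
    by (rule Lim_transform_eventually[THEN tendsto_cong_limit]) simp
qed

theorem mainTheorem6:
  fixes n :: nat
  shows "((\<lambda>x::real. ln (A n x / A (Suc n) x) / x\<^sup>2) \<longlongrightarrow>
           - 1 / (2 * (real n + 1) ^ 4 * zeta_real 2)) (at_right 0)"
proof -
  have "((\<lambda>x. ln (A n x / A (Suc n) x) / x\<^sup>2) \<longlongrightarrow> - 1 / (2 * (real n + 1) ^ 4) / zeta_real 2)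
          (at_right 0)"
    by (rule tendsto_ln_quotient_over_square[OF A_over_square_tendsto _ A_diff_Suc_tendsto])
      (simp add: zeta_real_2)
  then show ?thesis by simp
qed

end
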